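(* Let $k\ge1$ be the cache size. For any access graph $G$, \[-1+\frac1k\le\mathrm{Min}^G(\mathrm{FIFO},\mathrm{LRU})\quad\text{and}\quad\mathrm{Max}^G(\mathrm{FIFO},\mathrm{LRU})\le\frac12-\frac1{4k-2}.\]
   Context: Paging: a cache holds at most $k$ pages and is initially empty. A request to a page in the cache is a hit; otherwise it is a fault, the page is brought into the cache, evicting a page first if the cache is full. $\mathcal{A}(I)$ is the number of faults of $\mathcal{A}$ on request sequence $I$. LRU evicts the least recently requested cached page; FIFO evicts the cached page that entered the cache earliest. Access graph: a graph $G$ whose vertices are the pages; a request sequence respects $G$ if any two consecutive requests are identical or adjacent in $G$; $L(G)$ is the set of such sequences. Relative interval: $\mathrm{Min}_{\mathcal{A},\mathcal{B}}(n,G)=\min\{\mathcal{A}(I)-\mathcal{B}(I): I\in L(G),|I|=n\}$, $\mathrm{Max}_{\mathcal{A},\mathcal{B}}(n,G)$ analogously with max; $\mathrm{Min}^G(\mathcal{A},\mathcal{B})=\liminf_{n\to\infty}\mathrm{Min}_{\mathcal{A},\mathcal{B}}(n,G)/n$ and $\mathrm{Max}^G(\mathcal{A},\mathcal{B})=\limsup_{n\to\infty}\mathrm{Max}_{\mathcal{A},\mathcal{B}}(n,G)/n$. *)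

theory Defs
  imports Complex_Main "HOL-Library.Extended_Real" "HOL-Library.Liminf_Limsup"
begin

text \<open>For LRU the list is ordered by recency of
  request (most recent first); for FIFO it is ordered by time of entry
  (most recent entry first).\<close>

fun lru_run :: "nat \<Rightarrow> 'a list \<Rightarrow> 'a list \<Rightarrow> nat" where
  "lru_run k c [] = 0"
| "lru_run k c (p # ps) =
     (if p \<in> set c then lru_run k (p # remove1 p c) ps
      else Suc (lru_run k (p # (if length c < k then c else butlast c)) ps))"

fun fifo_run :: "nat \<Rightarrow> 'a list \<Rightarrow> 'a list \<Rightarrow> nat" where
  "fifo_run k c [] = 0"
| "fifo_run k c (p # ps) =
     (if p \<in> set c then fifo_run k c ps
      else Suc (fifo_run k (p # (if length c < k then c else butlast c)) ps))"

definition LRU :: "nat \<Rightarrow> 'a list \<Rightarrow> nat" where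
  "LRU k I = lru_run k [] I"

definition FIFO :: "nat \<Rightarrow> 'a list \<Rightarrow> nat" where
  "FIFO k I = fifo_run k [] I"

definition respects_graph :: "'a set \<Rightarrow> ('a \<Rightarrow> 'a \<Rightarrow> bool) \<Rightarrow> 'a list \<Rightarrow> bool" where
  "respects_graph V E I \<longleftrightarrow> set I \<subseteq> V \<and>
     (\<forall>i. Suc i < length I \<longrightarrow> I ! i = I ! (Suc i) \<or> E (I ! i) (I ! (Suc i)))"

definition MinFL :: "nat \<Rightarrow> 'a set \<Rightarrow> ('a \<Rightarrow> 'a \<Rightarrow> bool) \<Rightarrow> nat \<Rightarrow> int" where
  "MinFL k V E n = Min {int (FIFO k I) - int (LRU k I) | I. respects_graph V E I \<and> length I = n}"

definition MaxFL :: "nat \<Rightarrow> 'a set \<Rightarrow> ('a \<Rightarrow> 'a \<Rightarrow> bool) \<Rightarrow> nat \<Rightarrow> int" where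
  "MaxFL k V E n = Max {int (FIFO k I) - int (LRU k I) | I. respects_graph V E I \<and> length I = n}"

end

(* Every request sequence of length n satisfies LRU <= k FIFO + k, FIFO <= k LRU + k and
   2 FIFO <= n + LRU. The first two are instances of
   the k-competitiveness of one conservative algorithm against another, with the length
   of the longest prefix of one cache lying in the other cache as potential. The third
   holds because a request on which FIFO faults but LRU hits can be charged to an earlier
   FIFO hit on the same page. Hence k (FIFO - LRU) >= -(k - 1) LRU - k >= -(k - 1) n - k,
   and the second and third inequalities give (2k - 1) (FIFO - LRU) <= (k - 1) n + k;
   divide by n and let n grow. *)

theory Submission
  imports Defs
begin

text \<open>With \<open>mtf\<close> (move to front) a hit moves the page to the front, so the list stays
  in recency order and this is LRU's step; without it the list stays in order of entry
  and this is FIFO's step.\<close>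
definition paging_step :: "bool \<Rightarrow> nat \<Rightarrow> 'a list \<Rightarrow> 'a \<Rightarrow> 'a list" where
  "paging_step mtf k c p =
     (if p \<in> set c then (if mtf then p # remove1 p c else c)
      else p # (if length c < k then c else butlast c))"

fun faults :: "bool \<Rightarrow> nat \<Rightarrow> 'a list \<Rightarrow> 'a list \<Rightarrow> nat" where
  "faults mtf k c [] = 0"
| "faults mtf k c (p # ps) = of_bool (p \<notin> set c) + faults mtf k (paging_step mtf k c p) ps"

lemma lru_run_eq_faults: "lru_run k c I = faults True k c I"
  by (induction I arbitrary: c) (simp_all add: paging_step_def)

lemma fifo_run_eq_faults: "fifo_run k c I = faults False k c I"
  by (induction I arbitrary: c) (simp_all add: paging_step_def)

lemma faults_le_length: "faults mtf k c I \<le> length I"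
  by (induction I arbitrary: c) (auto intro: le_SucI)

definition valid_cache :: "nat \<Rightarrow> 'a list \<Rightarrow> bool" where
  "valid_cache k c \<longleftrightarrow> distinct c \<and> length c \<le> k"

lemma valid_cache_Nil [simp]: "valid_cache k []"
  by (simp add: valid_cache_def)

lemma valid_cache_paging_step:
  assumes "k \<ge> 1" "valid_cache k c"
  shows "valid_cache k (paging_step mtf k c p)"
  using assms by (cases c rule: rev_cases)
    (auto simp: valid_cache_def paging_step_def distinct_butlast length_remove1 dest: in_set_butlastD)

lemma insert_set_remove1: "p \<in> set c \<Longrightarrow> insert p (set (remove1 p c)) = set c"
  by (induction c) auto

lemma set_paging_step_hit: "p \<in> set c \<Longrightarrow> set (paging_step mtf k c p) = set c"
  by (simp add: paging_step_def insert_set_remove1)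

lemma set_paging_step_subset: "set (paging_step mtf k c p) \<subseteq> insert p (set c)"
  using set_remove1_subset[of p c] by (auto simp: paging_step_def dest: in_set_butlastD)

lemma paging_step_miss:
  "p \<notin> set c \<Longrightarrow> paging_step mtf k c p = p # (if length c < k then c else butlast c)"
  by (simp add: paging_step_def)

lemma in_set_paging_step: "p \<in> set (paging_step mtf k c p)"
  by (simp add: paging_step_def)

definition cached_prefix :: "'a list \<Rightarrow> 'a list \<Rightarrow> nat" where
  "cached_prefix c d = length (takeWhile (\<lambda>x. x \<in> set d) c)"

lemma cached_prefix_le_length: "cached_prefix c d \<le> length c"
  by (simp add: cached_prefix_def length_takeWhile_le)

lemma cached_prefix_Cons_cached: "p \<in> set d \<Longrightarrow> cached_prefix (p # c) d = Suc (cached_prefix c d)"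
  by (simp add: cached_prefix_def)

lemma cached_prefix_le_remove1: "cached_prefix c d \<le> Suc (cached_prefix (remove1 p c) d)"
  unfolding cached_prefix_def by (induction c) auto

lemma cached_prefix_butlast:
  "cached_prefix c d < length c \<Longrightarrow> cached_prefix (butlast c) d = cached_prefix c d"
  unfolding cached_prefix_def by (induction c) auto

text \<open>If a full cache had all its pages in another cache of the same capacity, the two
  would hold the same pages.\<close>
lemma cached_prefix_less_if_full:
  assumes "valid_cache k c" "length c = k" "valid_cache k d" "p \<in> set d" "p \<notin> set c"
  shows "cached_prefix c d < length c"
proof (rule ccontr)
  assume "\<not> cached_prefix c d < length c"
  then have "length (takeWhile (\<lambda>x. x \<in> set d) c) = length c"
    using cached_prefix_le_length[of c d] by (simp add: cached_prefix_def)
  then have "set c \<subseteq> set d"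
    by (metis takeWhile_eq_take take_all order_refl set_takeWhileD subsetI)
  moreover have "card (set d) \<le> card (set c)"
    using assms(1-3) by (simp add: valid_cache_def distinct_card)
  ultimately have "set c = set d"
    by (simp add: card_seteq)
  with assms(4,5) show False by simp
qed

text \<open>A fault of \<open>c\<close> on a page cached in \<open>d\<close> lengthens the prefix; a fault of \<open>d\<close>
  pays \<open>k\<close>, which covers a fault of \<open>c\<close> together with any shrinking of the prefix.\<close>
lemma cached_prefix_step:
  assumes "k \<ge> 1" "valid_cache k c" "valid_cache k d"
  shows "of_bool (p \<notin> set c) + cached_prefix c d
    \<le> k * of_bool (p \<notin> set d) + cached_prefix (paging_step a k c p) (paging_step b k d p)"
proof (cases "p \<in> set d")
  case pd: True
  then have d': "cached_prefix x (paging_step b k d p) = cached_prefix x d" for x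
    by (simp add: cached_prefix_def set_paging_step_hit)
  show ?thesis
  proof (cases "p \<in> set c")
    case True
    then show ?thesis
      using pd d' cached_prefix_le_remove1[of c d p]
      by (auto simp: paging_step_def cached_prefix_def)
  next
    case False
    have "length c < k \<or> cached_prefix c d < length c"
      using cached_prefix_less_if_full[OF assms(2) _ assms(3) pd False] assms(2)
      by (cases "length c = k") (auto simp: valid_cache_def)
    then show ?thesis
      using pd d' False cached_prefix_butlast[of c d]
      by (auto simp: paging_step_miss cached_prefix_Cons_cached)
  qed
next
  case False
  have "cached_prefix c d \<le> k"
    using assms(2) cached_prefix_le_length[of c d] by (simp add: valid_cache_def)
  moreover have "p \<notin> set c \<Longrightarrow> cached_prefix (paging_step a k c p) (paging_step b k d p) \<ge> 1"
    using in_set_paging_step[of p b k d] by (simp add: paging_step_miss cached_prefix_def)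
  ultimately show ?thesis
    using False by (cases "p \<in> set c") auto
qed

lemma faults_plus_cached_prefix_le:
  assumes "k \<ge> 1" "valid_cache k c" "valid_cache k d"
  shows "faults a k c I + cached_prefix c d \<le> k * faults b k d I + k"
  using assms(2,3)
proof (induction I arbitrary: c d)
  case Nil
  then show ?case
    using cached_prefix_le_length[of c d] by (simp add: valid_cache_def)
next
  case (Cons p I)
  have "faults a k (paging_step a k c p) I
      + cached_prefix (paging_step a k c p) (paging_step b k d p)
    \<le> k * faults b k (paging_step b k d p) I + k"
    using valid_cache_paging_step[OF assms(1)] Cons.prems by (intro Cons.IH)
  moreover have "of_bool (p \<notin> set c) + cached_prefix c d
    \<le> k * of_bool (p \<notin> set d) + cached_prefix (paging_step a k c p) (paging_step b k d p)"
    using cached_prefix_step[OF assms(1) Cons.prems] .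
  ultimately show ?case
    by (simp add: distrib_left)
qed

corollary LRU_le_mult_FIFO: "k \<ge> 1 \<Longrightarrow> LRU k I \<le> k * FIFO k I + k"
  using faults_plus_cached_prefix_le[of k "[]" "[]" True I False]
  by (simp add: LRU_def FIFO_def lru_run_eq_faults fifo_run_eq_faults)

corollary FIFO_le_mult_LRU: "k \<ge> 1 \<Longrightarrow> FIFO k I \<le> k * LRU k I + k"
  using faults_plus_cached_prefix_le[of k "[]" "[]" False I True]
  by (simp add: LRU_def FIFO_def lru_run_eq_faults fifo_run_eq_faults)

lemma LRU_le_length: "LRU k I \<le> length I"
  by (simp add: LRU_def lru_run_eq_faults faults_le_length)

definition ahead :: "'a \<Rightarrow> 'a list \<Rightarrow> 'a set" where
  "ahead p c = set (takeWhile (\<lambda>x. x \<noteq> p) c)"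

lemma finite_ahead [simp]: "finite (ahead p c)"
  by (simp add: ahead_def)

lemma card_ahead_less:
  assumes "valid_cache k c" "p \<in> set c"
  shows "card (ahead p c) < k"
proof -
  have "length (takeWhile (\<lambda>x. x \<noteq> p) c) < length c"
    using assms(2) by (induction c) auto
  then show ?thesis
    using assms(1) card_length[of "takeWhile (\<lambda>x. x \<noteq> p) c"]
    by (simp add: ahead_def valid_cache_def)
qed

lemma ahead_remove1: "p \<noteq> q \<Longrightarrow> insert q (ahead p (remove1 q c)) = insert q (ahead p c)"
  unfolding ahead_def by (induction c) auto

lemma ahead_butlast: "p \<in> set (butlast c) \<Longrightarrow> ahead p (butlast c) = ahead p c"
  unfolding ahead_def by (induction c) auto

lemma in_set_butlast_if_before_last:
  "p \<in> set c \<Longrightarrow> length (takeWhile (\<lambda>x. x \<noteq> p) c) + 2 \<le> length c \<Longrightarrow> p \<in> set (butlast c)"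
proof (induction c)
  case (Cons a c)
  then show ?case by (cases c) (auto split: if_splits)
qed simp

lemma ahead_lru_step:
  assumes "p \<noteq> q" "p \<in> set (paging_step True k c q)"
  shows "ahead p (paging_step True k c q) = insert q (ahead p c)"
proof (cases "q \<in> set c")
  case True
  then show ?thesis
    using assms ahead_remove1[OF assms(1), of c] by (simp add: paging_step_def ahead_def)
next
  case False
  with assms have "length c < k \<or> p \<in> set (butlast c)"
    by (auto simp: paging_step_miss split: if_splits)
  then show ?thesis
    using assms False ahead_butlast[of p c] by (auto simp: paging_step_miss ahead_def)
qed

lemma ahead_fifo_miss:
  assumes "q \<notin> set c" "p \<in> set c" "distinct c" "card (ahead p c) + 2 \<le> k"
  shows "p \<in> set (paging_step False k c q) \<and> ahead p (paging_step False k c q) = insert q (ahead p c)"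
proof -
  have "card (ahead p c) = length (takeWhile (\<lambda>x. x \<noteq> p) c)"
    using assms(3) by (simp add: ahead_def distinct_card)
  then have "length c < k \<or> p \<in> set (butlast c)"
    using assms(2,4) in_set_butlast_if_before_last[of p c] by linarith
  then show ?thesis
    using assms(1,2) ahead_butlast[of p c] by (auto simp: paging_step_miss ahead_def)
qed

text \<open>The set \<open>T\<close> contains every page that was hit in FIFO's cache since it last
  entered it. For any other page \<open>p\<close> in LRU's cache, the request that brought \<open>p\<close> into
  FIFO's cache is its last one, so every page that entered FIFO's cache after \<open>p\<close> has
  been requested after \<open>p\<close>.\<close>
definition fifo_tracks_lru :: "'a set \<Rightarrow> 'a list \<Rightarrow> 'a list \<Rightarrow> bool" where
  "fifo_tracks_lru T cL cF \<longleftrightarrow> (\<forall>p \<in> set cL - T. p \<in> set cF \<and> ahead p cF \<subseteq> ahead p cL)"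

lemma fifo_tracks_lru_step:
  assumes "k \<ge> 1" "valid_cache k cL" "valid_cache k cF" "fifo_tracks_lru T cL cF"
  shows "fifo_tracks_lru (if q \<in> set cF then insert q T else T - {q})
    (paging_step True k cL q) (paging_step False k cF q)"
  unfolding fifo_tracks_lru_def
proof
  fix p
  let ?cL' = "paging_step True k cL q" and ?cF' = "paging_step False k cF q"
  assume p: "p \<in> set ?cL' - (if q \<in> set cF then insert q T else T - {q})"
  show "p \<in> set ?cF' \<and> ahead p ?cF' \<subseteq> ahead p ?cL'"
  proof (cases "p = q")
    case True
    with p have "q \<notin> set cF"
      by (auto split: if_splits)
    with True show ?thesis
      by (simp add: paging_step_miss ahead_def)
  next
    case False
    with p set_paging_step_subset[of True k cL q] have "p \<in> set cL - T"
      by (auto split: if_splits)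
    with assms(4) have pF: "p \<in> set cF" and ahead_F: "ahead p cF \<subseteq> ahead p cL"
      by (auto simp: fifo_tracks_lru_def)
    have ahead_L: "ahead p ?cL' = insert q (ahead p cL)"
      by (rule ahead_lru_step[OF False]) (use p in blast)
    show ?thesis
    proof (cases "q \<in> set cF")
      case True
      then have "?cF' = cF"
        by (simp add: paging_step_def)
      with pF ahead_F ahead_L show ?thesis
        by auto
    next
      case qF: False
      then have "q \<notin> ahead p cF"
        by (auto simp: ahead_def dest: set_takeWhileD)
      then have "card (ahead p cF) + 1 = card (insert q (ahead p cF))"
        by simp
      also have "\<dots> \<le> card (ahead p ?cL')"
        using ahead_F ahead_L by (intro card_mono) auto
      also have "\<dots> < k"
        by (rule card_ahead_less[OF valid_cache_paging_step[OF assms(1,2)]]) (use p in blast)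
      finally have "p \<in> set ?cF' \<and> ahead p ?cF' = insert q (ahead p cF)"
        using ahead_fifo_miss[OF qF pF] assms(3) by (simp add: valid_cache_def)
      with ahead_F ahead_L show ?thesis
        by auto
    qed
  qed
qed

text \<open>Every FIFO fault on an LRU hit uses up a page of \<open>T\<close>, and pages enter \<open>T\<close> only on
  FIFO hits.\<close>
lemma two_fifo_faults_le:
  assumes "k \<ge> 1" "valid_cache k cL" "valid_cache k cF" "fifo_tracks_lru T cL cF" "finite T"
  shows "2 * faults False k cF I \<le> length I + faults True k cL I + card T"
  using assms(2-)
proof (induction I arbitrary: cL cF T)
  case (Cons q I)
  let ?T' = "if q \<in> set cF then insert q T else T - {q}"
  have IH: "2 * faults False k (paging_step False k cF q) I
    \<le> length I + faults True k (paging_step True k cL q) I + card ?T'"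
    using Cons.prems(4)
    by (intro Cons.IH valid_cache_paging_step[OF assms(1)] fifo_tracks_lru_step[OF assms(1)] Cons.prems)
      simp
  consider "q \<in> set cF" | "q \<notin> set cF" "q \<in> set cL" | "q \<notin> set cF" "q \<notin> set cL"
    by blast
  then show ?case
  proof cases
    case 1
    then have "card ?T' \<le> Suc (card T)"
      using Cons.prems(4) by (simp add: card_insert_if)
    with IH 1 show ?thesis by simp
  next
    case 2
    then have "q \<in> T"
      using Cons.prems(3) by (auto simp: fifo_tracks_lru_def)
    then have "Suc (card ?T') = card T"
      using 2 card_Suc_Diff1[OF Cons.prems(4)] by simp
    with IH 2 show ?thesis by simp
  next
    case 3
    then have "card ?T' \<le> card T"
      using Cons.prems(4) by (simp add: card_Diff1_le)
    with IH 3 show ?thesis by simp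
  qed
qed simp

corollary two_FIFO_le_length_plus_LRU: "k \<ge> 1 \<Longrightarrow> 2 * FIFO k I \<le> length I + LRU k I"
  using two_fifo_faults_le[of k "[]" "[]" "{}" I]
  by (simp add: FIFO_def LRU_def fifo_run_eq_faults lru_run_eq_faults fifo_tracks_lru_def)

lemma FIFO_minus_LRU_ge:
  assumes "k \<ge> 1" "length I = n" "n \<ge> 1"
  shows "-1 + 1 / real k - 1 / real n \<le> (real (FIFO k I) - real (LRU k I)) / real n"
proof -
  have "real (LRU k I) \<le> real k * real (FIFO k I) + real k"
    using LRU_le_mult_FIFO[OF assms(1)] by (metis of_nat_add of_nat_le_iff of_nat_mult)
  moreover have "(real k - 1) * real (LRU k I) \<le> (real k - 1) * real n"
    using assms LRU_le_length[of k I] by (intro mult_left_mono) auto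
  ultimately have bound: "- (real k - 1) * real n - real k \<le> real k * (real (FIFO k I) - real (LRU k I))"
    by (simp add: algebra_simps)
  have "-1 + 1 / real k - 1 / real n = (- (real k - 1) * real n - real k) / (real k * real n)"
    using assms by (simp add: field_simps)
  also have "\<dots> \<le> real k * (real (FIFO k I) - real (LRU k I)) / (real k * real n)"
    using bound by (intro divide_right_mono) auto
  also have "\<dots> = (real (FIFO k I) - real (LRU k I)) / real n"
    using assms by simp
  finally show ?thesis .
qed

lemma FIFO_minus_LRU_le:
  assumes "k \<ge> 1" "length I = n" "n \<ge> 1"
  shows "(real (FIFO k I) - real (LRU k I)) / real n
    \<le> 1/2 - 1 / (4 * real k - 2) + real k / (2 * real k - 1) / real n"
proof -
  have "real (FIFO k I) \<le> real k * real (LRU k I) + real k"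
    using FIFO_le_mult_LRU[OF assms(1)] by (metis of_nat_add of_nat_le_iff of_nat_mult)
  moreover have "(real k - 1) * (2 * real (FIFO k I)) \<le> (real k - 1) * (real n + real (LRU k I))"
    using assms two_FIFO_le_length_plus_LRU[OF assms(1), of I] by (intro mult_left_mono) auto
  ultimately have bound: "(2 * real k - 1) * (real (FIFO k I) - real (LRU k I)) \<le> (real k - 1) * real n + real k"
    by (simp add: algebra_simps)
  have pos: "2 * real k - 1 > 0"
    using assms(1) by simp
  have "(real (FIFO k I) - real (LRU k I)) / real n
      = (2 * real k - 1) * (real (FIFO k I) - real (LRU k I)) / ((2 * real k - 1) * real n)"
    using pos by simp
  also have "\<dots> \<le> ((real k - 1) * real n + real k) / ((2 * real k - 1) * real n)"
    using bound pos by (intro divide_right_mono) auto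
  also have "\<dots> = (real k - 1) / (2 * real k - 1) + real k / (2 * real k - 1) / real n"
    using assms by (simp add: add_divide_distrib)
  also have "(real k - 1) / (2 * real k - 1) = 1/2 - 1 / (2 * (2 * real k - 1))"
    using pos by (simp add: field_simps)
  finally show ?thesis
    by (simp add: algebra_simps)
qed

lemma FIFO_minus_LRU_set_finite_nonempty:
  fixes V :: "'a set" and E :: "'a \<Rightarrow> 'a \<Rightarrow> bool" and k n :: nat
  assumes "finite V" "V \<noteq> {}"
  defines "S \<equiv> {int (FIFO k I) - int (LRU k I) | I. respects_graph V E I \<and> length I = n}"
  shows "finite S" "S \<noteq> {}"
proof -
  let ?diff = "\<lambda>I. int (FIFO k I) - int (LRU k I)"
  have "S \<subseteq> ?diff ` {I. set I \<subseteq> V \<and> length I = n}"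
  proof
    fix x
    assume "x \<in> S"
    then obtain I where "x = ?diff I" "respects_graph V E I" "length I = n"
      unfolding S_def by blast
    then show "x \<in> ?diff ` {I. set I \<subseteq> V \<and> length I = n}"
      by (auto simp: respects_graph_def)
  qed
  then show "finite S"
    by (rule finite_subset) (rule finite_imageI[OF finite_lists_length_eq[OF assms(1)]])
  obtain v where "v \<in> V"
    using assms(2) by blast
  then have "respects_graph V E (replicate n v)"
    by (simp add: respects_graph_def set_replicate_conv_if)
  then have "?diff (replicate n v) \<in> S"
    unfolding S_def by auto
  then show "S \<noteq> {}"
    by blast
qed

lemma MinFL_ge:
  assumes "k \<ge> 1" "finite V" "V \<noteq> {}" "n \<ge> 1"
  shows "-1 + 1 / real k - 1 / real n \<le> real_of_int (MinFL k V E n) / real n"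
proof -
  have "MinFL k V E n \<in> {int (FIFO k I) - int (LRU k I) | I. respects_graph V E I \<and> length I = n}"
    unfolding MinFL_def using FIFO_minus_LRU_set_finite_nonempty[OF assms(2,3)] by (rule Min_in)
  then obtain I where "respects_graph V E I" "length I = n"
    and min: "MinFL k V E n = int (FIFO k I) - int (LRU k I)"
    unfolding mem_Collect_eq by blast
  have "real_of_int (MinFL k V E n) / real n = (real (FIFO k I) - real (LRU k I)) / real n"
    unfolding min by simp
  then show ?thesis
    using FIFO_minus_LRU_ge[OF assms(1) \<open>length I = n\<close> assms(4)] by linarith
qed

lemma MaxFL_le:
  assumes "k \<ge> 1" "finite V" "V \<noteq> {}" "n \<ge> 1"
  shows "real_of_int (MaxFL k V E n) / real n
    \<le> 1/2 - 1 / (4 * real k - 2) + real k / (2 * real k - 1) / real n"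
proof -
  have "MaxFL k V E n \<in> {int (FIFO k I) - int (LRU k I) | I. respects_graph V E I \<and> length I = n}"
    unfolding MaxFL_def using FIFO_minus_LRU_set_finite_nonempty[OF assms(2,3)] by (rule Max_in)
  then obtain I where "respects_graph V E I" "length I = n"
    and max: "MaxFL k V E n = int (FIFO k I) - int (LRU k I)"
    unfolding mem_Collect_eq by blast
  have "real_of_int (MaxFL k V E n) / real n = (real (FIFO k I) - real (LRU k I)) / real n"
    unfolding max by simp
  then show ?thesis
    using FIFO_minus_LRU_le[OF assms(1) \<open>length I = n\<close> assms(4)] by linarith
qed

lemma liminf_ge_if_ge_minus_const_over_n:
  fixes f :: "nat \<Rightarrow> real"
  assumes "\<And>n. n \<ge> 1 \<Longrightarrow> c - C / real n \<le> f n"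
  shows "ereal c \<le> liminf (\<lambda>n. ereal (f n))"
proof -
  have "(\<lambda>n. c - C / real n) \<longlonglongrightarrow> c - 0"
    by (rule tendsto_diff[OF tendsto_const lim_const_over_n])
  then have "liminf (\<lambda>n. ereal (c - C / real n)) = ereal c"
    unfolding diff_zero lim_ereal[symmetric] by (rule lim_imp_Liminf[OF trivial_limit_sequentially])
  moreover have "liminf (\<lambda>n. ereal (c - C / real n)) \<le> liminf (\<lambda>n. ereal (f n))"
    by (rule Liminf_mono) (use assms in \<open>auto simp: eventually_sequentially\<close>)
  ultimately show ?thesis
    by simp
qed

lemma limsup_le_if_le_plus_const_over_n:
  fixes f :: "nat \<Rightarrow> real"
  assumes "\<And>n. n \<ge> 1 \<Longrightarrow> f n \<le> c + C / real n"
  shows "limsup (\<lambda>n. ereal (f n)) \<le> ereal c"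
proof -
  have "(\<lambda>n. c + C / real n) \<longlonglongrightarrow> c + 0"
    by (rule tendsto_add[OF tendsto_const lim_const_over_n])
  then have "limsup (\<lambda>n. ereal (c + C / real n)) = ereal c"
    unfolding add_0_right lim_ereal[symmetric] by (rule lim_imp_Limsup[OF trivial_limit_sequentially])
  moreover have "limsup (\<lambda>n. ereal (f n)) \<le> limsup (\<lambda>n. ereal (c + C / real n))"
    by (rule Limsup_mono) (use assms in \<open>auto simp: eventually_sequentially\<close>)
  ultimately show ?thesis
    by simp
qed

theorem lemma4:
  fixes k :: nat and V :: "'a set" and E :: "'a \<Rightarrow> 'a \<Rightarrow> bool"
  assumes "k \<ge> 1"
    and "finite V" and "V \<noteq> {}"
    and "\<And>u v. E u v \<Longrightarrow> u \<in> V \<and> v \<in> V"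
    and "\<And>u v. E u v \<Longrightarrow> E v u"
  shows "ereal (-1 + 1 / real k) \<le> liminf (\<lambda>n. ereal (real_of_int (MinFL k V E n) / real n)) \<and>
    limsup (\<lambda>n. ereal (real_of_int (MaxFL k V E n) / real n)) \<le> ereal (1/2 - 1 / (4 * real k - 2))"
proof
  show "ereal (-1 + 1 / real k) \<le> liminf (\<lambda>n. ereal (real_of_int (MinFL k V E n) / real n))"
    by (rule liminf_ge_if_ge_minus_const_over_n[where C = 1]) (rule MinFL_ge[OF assms(1-3)])
  show "limsup (\<lambda>n. ereal (real_of_int (MaxFL k V E n) / real n)) \<le> ereal (1/2 - 1 / (4 * real k - 2))"
    by (rule limsup_le_if_le_plus_const_over_n[where C = "real k / (2 * real k - 1)"])
      (rule MaxFL_le[OF assms(1-3)])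
qed

end
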